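(* On the open subset of $\mathbb{R}^4$ with coordinates $(u_1,u_2,p_{u_1},p_{u_2})$ where $u_1\neq u_2$, equipped with the canonical Poisson bracket $\{u_1,u_2\}=\{p_{u_1},p_{u_2}\}=0$, $\{u_i,p_{u_j}\}=\delta_{ij}$, define $$a=\frac{p_{u_1}^2}{u_1-u_2}+\frac{p_{u_2}^2}{u_2-u_1}-u_1^2-u_1u_2-u_2^2,\qquad b=\frac{u_2p_{u_1}^2}{u_2-u_1}+\frac{u_1p_{u_2}^2}{u_1-u_2}+(u_1+u_2)u_1u_2,$$ (so that $p_{u_i}^2=u_i^3+au_i+b$ for $i=1,2$), and, with $\beta=\dfrac{p_{u_1}-p_{u_2}}{u_1-u_2}$, $$x_3=\beta^2-u_1-u_2,\qquad y_3=p_{u_1}+\beta\,(x_3-u_1).$$ Then these four functions satisfy $$\{a,b\}=0,\quad \{a,x_3\}=0,\quad \{a,y_3\}=0,\quad \{b,x_3\}=2y_3,\quad \{b,y_3\}=3x_3^2+a,\quad \{x_3,y_3\}=-1,$$ together with the relation $y_3^2=x_3^3+ax_3+b$. In particular, the Hamiltonian system with Hamiltonian $H=a$ is superintegrable, with first integrals $a,b,x_3,y_3$.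
   Context: The Poisson bracket is $\{f,g\}=\sum_{i=1}^2\left(\frac{\partial f}{\partial u_i}\frac{\partial g}{\partial p_{u_i}}-\frac{\partial f}{\partial p_{u_i}}\frac{\partial g}{\partial u_i}\right)$. Geometrically, $(x_3,y_3)$ is the third intersection point of the cubic $y^2=x^3+ax+b$ with the line through $(u_1,p_{u_1})$ and $(u_2,p_{u_2})$. *)

theory Defs
  imports "HOL-Analysis.Analysis"
begin

text \<open>Functions on R^4 with coordinates (u1, u2, p1, p2), where p1 = p_{u_1}, p2 = p_{u_2}.\<close>
type_synonym fn4 = "real \<Rightarrow> real \<Rightarrow> real \<Rightarrow> real \<Rightarrow> real"

definition d_u1 :: "fn4 \<Rightarrow> fn4" where
  "d_u1 f = (\<lambda>u1 u2 p1 p2. deriv (\<lambda>t. f t u2 p1 p2) u1)"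
definition d_u2 :: "fn4 \<Rightarrow> fn4" where
  "d_u2 f = (\<lambda>u1 u2 p1 p2. deriv (\<lambda>t. f u1 t p1 p2) u2)"
definition d_p1 :: "fn4 \<Rightarrow> fn4" where
  "d_p1 f = (\<lambda>u1 u2 p1 p2. deriv (\<lambda>t. f u1 u2 t p2) p1)"
definition d_p2 :: "fn4 \<Rightarrow> fn4" where
  "d_p2 f = (\<lambda>u1 u2 p1 p2. deriv (\<lambda>t. f u1 u2 p1 t) p2)"

definition poisson :: "fn4 \<Rightarrow> fn4 \<Rightarrow> fn4" where
  "poisson f g = (\<lambda>u1 u2 p1 p2.
      d_u1 f u1 u2 p1 p2 * d_p1 g u1 u2 p1 p2 - d_p1 f u1 u2 p1 p2 * d_u1 g u1 u2 p1 p2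
    + d_u2 f u1 u2 p1 p2 * d_p2 g u1 u2 p1 p2 - d_p2 f u1 u2 p1 p2 * d_u2 g u1 u2 p1 p2)"

definition coef_a :: fn4 where
  "coef_a = (\<lambda>u1 u2 p1 p2. p1^2 / (u1 - u2) + p2^2 / (u2 - u1) - u1^2 - u1*u2 - u2^2)"

definition coef_b :: fn4 where
  "coef_b = (\<lambda>u1 u2 p1 p2. u2 * p1^2 / (u2 - u1) + u1 * p2^2 / (u1 - u2) + (u1 + u2) * u1 * u2)"

definition slope :: fn4 where
  "slope = (\<lambda>u1 u2 p1 p2. (p1 - p2) / (u1 - u2))"

definition x3 :: fn4 where
  "x3 = (\<lambda>u1 u2 p1 p2. (slope u1 u2 p1 p2)^2 - u1 - u2)"

definition y3 :: fn4 where
  "y3 = (\<lambda>u1 u2 p1 p2. p1 + slope u1 u2 p1 p2 * (x3 u1 u2 p1 p2 - u1))"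

end

theory Submission
  imports Defs
begin

text \<open>
  Away from the diagonal all four functions are rational, with only powers of \<open>u1 - u2\<close> in the
  denominators, so every claim reduces to a polynomial identity once the partial derivatives are
  known. The point \<open>(x3, y3)\<close> depends on \<open>p1, p2\<close> only through \<open>p1\<close> and the slope
  \<open>\<beta> = (p1 - p2) / (u1 - u2)\<close>, whose gradient \<open>(-\<beta>, \<beta>, 1, -1) / (u1 - u2)\<close> yields the
  partial derivatives of \<open>x3\<close> and \<open>y3\<close> by the chain rule.
\<close>

context
  fixes u1 u2 :: real
  assumes u_neq: "u1 \<noteq> u2"
begin

declare u_neq [simp] not_sym [OF u_neq, simp]

lemma partial_derivs_coef_a:
  "d_u1 coef_a u1 u2 p1 p2 = (p2^2 - p1^2) / (u1 - u2)^2 - 2 * u1 - u2"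
  "d_u2 coef_a u1 u2 p1 p2 = (p1^2 - p2^2) / (u1 - u2)^2 - u1 - 2 * u2"
  "d_p1 coef_a u1 u2 p1 p2 = 2 * p1 / (u1 - u2)"
  "d_p2 coef_a u1 u2 p1 p2 = - 2 * p2 / (u1 - u2)"
  by (unfold d_u1_def d_u2_def d_p1_def d_p2_def coef_a_def)
    (rule DERIV_imp_deriv; auto intro!: derivative_eq_intros; (simp add: divide_simps)?; algebra)+

lemma partial_derivs_coef_b:
  "d_u1 coef_b u1 u2 p1 p2 = (u2 * p1^2 - u1 * p2^2) / (u1 - u2)^2 + p2^2 / (u1 - u2) + 2 * u1 * u2 + u2^2"
  "d_u2 coef_b u1 u2 p1 p2 = (u1 * p2^2 - u2 * p1^2) / (u1 - u2)^2 - p1^2 / (u1 - u2) + u1^2 + 2 * u1 * u2"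
  "d_p1 coef_b u1 u2 p1 p2 = - 2 * u2 * p1 / (u1 - u2)"
  "d_p2 coef_b u1 u2 p1 p2 = 2 * u1 * p2 / (u1 - u2)"
  by (unfold d_u1_def d_u2_def d_p1_def d_p2_def coef_b_def)
    (rule DERIV_imp_deriv; auto intro!: derivative_eq_intros; (simp add: divide_simps)?; algebra)+

lemma slope_has_real_derivative:
  "((\<lambda>t. slope t u2 p1 p2) has_real_derivative - slope u1 u2 p1 p2 / (u1 - u2)) (at u1)"
  "((\<lambda>t. slope u1 t p1 p2) has_real_derivative slope u1 u2 p1 p2 / (u1 - u2)) (at u2)"
  "((\<lambda>t. slope u1 u2 t p2) has_real_derivative 1 / (u1 - u2)) (at p1)"
  "((\<lambda>t. slope u1 u2 p1 t) has_real_derivative - 1 / (u1 - u2)) (at p2)"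
  unfolding slope_def by (auto intro!: derivative_eq_intros simp: divide_simps)

lemma partial_derivs_x3:
  "d_u1 x3 u1 u2 p1 p2 = - 2 * slope u1 u2 p1 p2 ^ 2 / (u1 - u2) - 1"
  "d_u2 x3 u1 u2 p1 p2 = 2 * slope u1 u2 p1 p2 ^ 2 / (u1 - u2) - 1"
  "d_p1 x3 u1 u2 p1 p2 = 2 * slope u1 u2 p1 p2 / (u1 - u2)"
  "d_p2 x3 u1 u2 p1 p2 = - 2 * slope u1 u2 p1 p2 / (u1 - u2)"
  by (unfold d_u1_def d_u2_def d_p1_def d_p2_def x3_def)
    (rule DERIV_imp_deriv; auto intro!: derivative_eq_intros slope_has_real_derivative;
      (simp add: divide_simps)?; algebra)+

lemma partial_derivs_y3:
  "d_u1 y3 u1 u2 p1 p2 = (let s = slope u1 u2 p1 p2 in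
     - s / (u1 - u2) * (s^2 - 2 * u1 - u2) - s * (2 * s^2 / (u1 - u2) + 2))"
  "d_u2 y3 u1 u2 p1 p2 = (let s = slope u1 u2 p1 p2 in
     s / (u1 - u2) * (s^2 - 2 * u1 - u2) + s * (2 * s^2 / (u1 - u2) - 1))"
  "d_p1 y3 u1 u2 p1 p2 = (let s = slope u1 u2 p1 p2 in
     1 + (s^2 - 2 * u1 - u2) / (u1 - u2) + 2 * s^2 / (u1 - u2))"
  "d_p2 y3 u1 u2 p1 p2 = (let s = slope u1 u2 p1 p2 in
     - (s^2 - 2 * u1 - u2) / (u1 - u2) - 2 * s^2 / (u1 - u2))"
  by (unfold d_u1_def d_u2_def d_p1_def d_p2_def y3_def x3_def Let_def)
    (rule DERIV_imp_deriv; auto intro!: derivative_eq_intros slope_has_real_derivative;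
      (simp add: divide_simps)?; algebra)+

lemma poisson_coef_a_coef_b: "poisson coef_a coef_b u1 u2 p1 p2 = 0"
  unfolding poisson_def partial_derivs_coef_a partial_derivs_coef_b
  by (simp add: divide_simps) algebra

lemma poisson_coef_a_x3: "poisson coef_a x3 u1 u2 p1 p2 = 0"
  unfolding poisson_def partial_derivs_coef_a partial_derivs_x3
  by (simp add: slope_def divide_simps) algebra

lemma poisson_coef_a_y3: "poisson coef_a y3 u1 u2 p1 p2 = 0"
  unfolding poisson_def partial_derivs_coef_a partial_derivs_y3
  by (simp add: slope_def Let_def divide_simps) algebra

lemma poisson_coef_b_x3: "poisson coef_b x3 u1 u2 p1 p2 = 2 * y3 u1 u2 p1 p2"
  unfolding poisson_def partial_derivs_coef_b partial_derivs_x3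
  by (simp add: y3_def x3_def slope_def divide_simps) algebra

lemma poisson_coef_b_y3:
  "poisson coef_b y3 u1 u2 p1 p2 = 3 * (x3 u1 u2 p1 p2)^2 + coef_a u1 u2 p1 p2"
  unfolding poisson_def partial_derivs_coef_b partial_derivs_y3
  by (simp add: x3_def coef_a_def slope_def Let_def divide_simps) algebra

lemma poisson_x3_y3: "poisson x3 y3 u1 u2 p1 p2 = -1"
  unfolding poisson_def partial_derivs_x3 partial_derivs_y3
  by (simp add: Let_def divide_simps) algebra

lemma third_point_on_curve:
  "(y3 u1 u2 p1 p2)^2 = (x3 u1 u2 p1 p2)^3 + coef_a u1 u2 p1 p2 * x3 u1 u2 p1 p2 + coef_b u1 u2 p1 p2"
  unfolding y3_def x3_def coef_a_def coef_b_def slope_def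
  by (simp add: divide_simps) algebra

end

theorem proposition2:
  fixes u1 u2 p1 p2 :: real
  assumes "u1 \<noteq> u2"
  shows "poisson coef_a coef_b u1 u2 p1 p2 = 0
       \<and> poisson coef_a x3 u1 u2 p1 p2 = 0
       \<and> poisson coef_a y3 u1 u2 p1 p2 = 0
       \<and> poisson coef_b x3 u1 u2 p1 p2 = 2 * y3 u1 u2 p1 p2
       \<and> poisson coef_b y3 u1 u2 p1 p2 = 3 * (x3 u1 u2 p1 p2)^2 + coef_a u1 u2 p1 p2
       \<and> poisson x3 y3 u1 u2 p1 p2 = -1
       \<and> (y3 u1 u2 p1 p2)^2 = (x3 u1 u2 p1 p2)^3 + coef_a u1 u2 p1 p2 * x3 u1 u2 p1 p2
                                + coef_b u1 u2 p1 p2"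
  by (intro conjI poisson_coef_a_coef_b[OF assms] poisson_coef_a_x3[OF assms]
      poisson_coef_a_y3[OF assms] poisson_coef_b_x3[OF assms] poisson_coef_b_y3[OF assms]
      poisson_x3_y3[OF assms] third_point_on_curve[OF assms])

end
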